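(* Assume (F) and (H), and let $\bar c=\lim_{\varepsilon\to0^+}c_\varepsilon^*$. Let $\varepsilon_n\to0^+$ be a sequence along which: - $v_{\varepsilon_n}\to\bar v$ uniformly on compact subsets of $\mathbb R$; - $y_{\varepsilon_n}\to\bar y$ uniformly on $[0,1]$. Assume that for some real numbers $z_0<z_1$ and some $v_0\in[0,1)$ one has $\bar v(z)=z-z_0+v_0$ for all $z\in[z_0,z_1]$, and set $v_1:=\bar v(z_1)\in(0,1]$, so that $z_1-z_0=v_1-v_0$. Then $\bar c=\frac{F(v_1)-F(v_0)-h(v_1)+h(v_0)}{v_1-v_0}+\frac{\bar y(v_1)-\bar y(v_0)}{v_1-v_0}$, where $F(v)=\int_0^v f(s)\,ds$.
   Context: Assumptions. - (F): $f\in C([0,1])$, $f(0)=f(1)=0$, $f(s)>0$ for $s\in(0,1)$, and there is $k>0$ with $f(s)\le ks$ and $f(s)\le k(1-s)$ for all $s\in[0,1]$. - (H): $h\in C^2([0,1])$ with $h(0)=h'(0)=0$. Problems and speeds. - For $\varepsilon>0$ and $c\in\mathbb R$, a front profile is a function $v$ with $|v'|<1$, $v(0)=1/2$, satisfying $\varepsilon\big(v'/\sqrt{1-(v')^2}\big)'-(c+h'(v))v'+f(v)=0$ on $\mathbb R$, $v(-\infty)=0$, $v(+\infty)=1$, $v'>0$. - It corresponds to the solution $y(v)=\varepsilon\big(1/\sqrt{1-v'(z(v))^2}-1\big)$, where $z(\cdot)$ is the inverse of $v$, of the first-order problem (P1): $y'=(c+h'(v))\frac{\sqrt{y(2\varepsilon+y)}}{\varepsilon+y}-f(v)$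 on $[0,1]$, $y(0)=y(1)=0$, $y>0$ on $(0,1)$. - $c$ is admissible if (P1) has a solution. The admissible speeds form $[c_\varepsilon^*,+\infty)$, and $c_\varepsilon^*$ (the critical speed) is nondecreasing in $\varepsilon$. - $v_\varepsilon$ is the critical profile (the front profile with $c=c_\varepsilon^*$, $v_\varepsilon(0)=1/2$), and $y_\varepsilon$ is its associated solution of (P1). *)

theory Defs
  imports "HOL-Analysis.Analysis"
begin

definition hypF :: "(real \<Rightarrow> real) \<Rightarrow> bool" where
  "hypF f \<longleftrightarrow> continuous_on {0..1} f \<and> f 0 = 0 \<and> f 1 = 0 \<and>
     (\<forall>s\<in>{0<..<1}. f s > 0) \<and>
     (\<exists>k>0. \<forall>s\<in>{0..1}. f s \<le> k * s \<and> f s \<le> k * (1 - s))"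

definition hypH :: "(real \<Rightarrow> real) \<Rightarrow> (real \<Rightarrow> real) \<Rightarrow> bool" where
  "hypH h dh \<longleftrightarrow> (\<exists>d2h. (\<forall>x\<in>{0..1}.
        (h has_real_derivative dh x) (at x within {0..1}) \<and>
        (dh has_real_derivative d2h x) (at x within {0..1})) \<and>
      continuous_on {0..1} d2h) \<and> h 0 = 0 \<and> dh 0 = 0"

definition front_profile ::
  "(real \<Rightarrow> real) \<Rightarrow> (real \<Rightarrow> real) \<Rightarrow> real \<Rightarrow> real \<Rightarrow> (real \<Rightarrow> real) \<Rightarrow> bool" where
  "front_profile f dh eps c v \<longleftrightarrow>
     (\<exists>w g. (\<forall>z. (v has_real_derivative w z) (at z)) \<and>
        (\<forall>z. \<bar>w z\<bar> < 1 \<and> w z > 0) \<and>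
        (\<forall>z. ((\<lambda>t. w t / sqrt (1 - (w t)\<^sup>2)) has_real_derivative g z) (at z)) \<and>
        (\<forall>z. eps * g z - (c + dh (v z)) * w z + f (v z) = 0)) \<and>
     v 0 = 1/2 \<and> (v \<longlongrightarrow> 0) at_bot \<and> (v \<longlongrightarrow> 1) at_top"

definition P1_sol ::
  "(real \<Rightarrow> real) \<Rightarrow> (real \<Rightarrow> real) \<Rightarrow> real \<Rightarrow> real \<Rightarrow> (real \<Rightarrow> real) \<Rightarrow> bool" where
  "P1_sol f dh eps c y \<longleftrightarrow>
     (\<forall>s\<in>{0..1}. (y has_real_derivative
         ((c + dh s) * sqrt (y s * (2 * eps + y s)) / (eps + y s) - f s)) (at s within {0..1})) \<and>
     y 0 = 0 \<and> y 1 = 0 \<and> (\<forall>s\<in>{0<..<1}. y s > 0)"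

definition admissible :: "(real \<Rightarrow> real) \<Rightarrow> (real \<Rightarrow> real) \<Rightarrow> real \<Rightarrow> real \<Rightarrow> bool" where
  "admissible f dh eps c \<longleftrightarrow> (\<exists>y. P1_sol f dh eps c y)"

definition crit_speed :: "(real \<Rightarrow> real) \<Rightarrow> (real \<Rightarrow> real) \<Rightarrow> real \<Rightarrow> real" where
  "crit_speed f dh eps = Inf {c. admissible f dh eps c}"

text \<open>Solution of (P1) associated with a front profile v:
  y(s) = eps (1/sqrt(1 - v'(z(s))^2) - 1), z the inverse of v; y(0)=y(1)=0.\<close>
definition assoc_y :: "real \<Rightarrow> (real \<Rightarrow> real) \<Rightarrow> real \<Rightarrow> real" where
  "assoc_y eps v s = (if s \<in> {0<..<1}
      then eps * (1 / sqrt (1 - (deriv v (inv v s))\<^sup>2) - 1) else 0)"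

definition primF :: "(real \<Rightarrow> real) \<Rightarrow> real \<Rightarrow> real" where
  "primF f v = integral {0..v} f"

end

theory Submission imports Defs begin

text \<open>Along a front \<open>v\<close> of speed \<open>c\<close>, put \<open>Y(z) = y(v(z)) = eps (1 / sqrt (1 - v'(z)\<^sup>2) - 1)\<close>.
  The energy \<open>E = Y - c v - h(v) + F(v)\<close> has derivative \<open>-(c + h'(v)) v' (1 - v')\<close>, so
  \<open>\<bar>E(z\<^sub>1) - E(z\<^sub>0)\<bar> \<le> K ((z\<^sub>1 - z\<^sub>0) - (v(z\<^sub>1) - v(z\<^sub>0)))\<close> with \<open>K\<close> independent of \<open>eps\<close>.
  In the limit the right-hand side vanishes, since \<open>vbar\<close> has slope \<open>1\<close> on \<open>[z\<^sub>0, z\<^sub>1]\<close>;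
  the energy identity for \<open>cbar\<close> is what remains. Passing to the limit in \<open>y(v(z))\<close> needs
  continuity of \<open>ybar\<close>, which comes from a Lipschitz bound on the \<open>y\<close>'s that is uniform in \<open>eps\<close>
  and holds up to the end points, where \<open>Y \<le> K v\<close> and \<open>Y \<le> K (1 - v)\<close>: these hold because
  \<open>v'\<close>, and with it \<open>Y\<close>, must become small somewhere on every long interval.\<close>

lemma DERIV_dominated_imp_abs_diff_le:
  fixes g k g' k' :: "real \<Rightarrow> real"
  assumes "a \<le> b"
    and g: "\<And>x. a \<le> x \<Longrightarrow> x \<le> b \<Longrightarrow> (g has_real_derivative g' x) (at x)"
    and k: "\<And>x. a \<le> x \<Longrightarrow> x \<le> b \<Longrightarrow> (k has_real_derivative k' x) (at x)"
    and dom: "\<And>x. a \<le> x \<Longrightarrow> x \<le> b \<Longrightarrow> \<bar>g' x\<bar> \<le> k' x"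
  shows "\<bar>g b - g a\<bar> \<le> k b - k a"
proof -
  have "k a - g a \<le> k b - g b"
  proof (rule DERIV_nonneg_imp_nondecreasing[of a b "\<lambda>t. k t - g t", OF \<open>a \<le> b\<close>])
    fix x assume "a \<le> x" "x \<le> b"
    with g k dom show "\<exists>y. ((\<lambda>t. k t - g t) has_real_derivative y) (at x) \<and> 0 \<le> y"
      by (intro exI[of _ "k' x - g' x"]) (force intro: DERIV_diff simp: abs_le_iff)
  qed
  moreover have "k a + g a \<le> k b + g b"
  proof (rule DERIV_nonneg_imp_nondecreasing[of a b "\<lambda>t. k t + g t", OF \<open>a \<le> b\<close>])
    fix x assume "a \<le> x" "x \<le> b"
    with g k dom show "\<exists>y. ((\<lambda>t. k t + g t) has_real_derivative y) (at x) \<and> 0 \<le> y"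
      by (intro exI[of _ "k' x + g' x"]) (force intro: DERIV_add simp: abs_le_iff)
  qed
  ultimately show ?thesis by (simp add: abs_le_iff)
qed

lemma lipschitz_on_tendsto:
  assumes "F \<noteq> bot"
    and lip: "\<forall>\<^sub>F n in F. C-lipschitz_on S (f n)"
    and lim: "\<And>x. x \<in> S \<Longrightarrow> ((\<lambda>n. f n x) \<longlongrightarrow> l x) F"
  shows "C-lipschitz_on S l"
proof (rule lipschitz_onI)
  show "0 \<le> C"
    using eventually_happens'[OF \<open>F \<noteq> bot\<close> lip] lipschitz_on_nonneg by blast
  fix x y assume "x \<in> S" "y \<in> S"
  have "((\<lambda>n. dist (f n x) (f n y)) \<longlongrightarrow> dist (l x) (l y)) F"
    by (intro tendsto_dist lim \<open>x \<in> S\<close> \<open>y \<in> S\<close>)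
  then show "dist (l x) (l y) \<le> C * dist x y"
    by (rule tendsto_upperbound)
       (use lip \<open>x \<in> S\<close> \<open>y \<in> S\<close> \<open>F \<noteq> bot\<close> in \<open>auto elim: eventually_mono dest: lipschitz_onD\<close>)
qed

lemma uniform_limit_tendsto_compose:
  fixes f :: "'a \<Rightarrow> 'b::metric_space \<Rightarrow> 'c::real_normed_vector"
  assumes ul: "uniform_limit S f l F" and "continuous_on S l"
    and x: "(x \<longlongrightarrow> a) F" "a \<in> S" "\<forall>\<^sub>F n in F. x n \<in> S"
  shows "((\<lambda>n. f n (x n)) \<longlongrightarrow> l a) F"
proof -
  have "((\<lambda>n. f n (x n) - l (x n)) \<longlongrightarrow> 0) F"
  proof (rule tendstoI)
    fix e :: real assume "e > 0"
    with ul x(3) show "\<forall>\<^sub>F n in F. dist (f n (x n) - l (x n)) 0 < e"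
      by (auto dest!: uniform_limitD elim: eventually_elim2 simp: dist_norm)
  qed
  moreover have "((\<lambda>n. l (x n)) \<longlongrightarrow> l a) F"
    by (rule continuous_on_tendsto_compose[OF \<open>continuous_on S l\<close> x])
  ultimately show ?thesis
    using tendsto_add by fastforce
qed

locale travelling_front =
  fixes f dh :: "real \<Rightarrow> real" and eps c K :: real and v :: "real \<Rightarrow> real"
  assumes eps_pos: "0 < eps"
    and profile: "front_profile f dh eps c v"
    and coeff_bound: "\<And>x. x \<in> {0..1} \<Longrightarrow> \<bar>c\<bar> + \<bar>dh x\<bar> + \<bar>f x\<bar> \<le> K"
begin

abbreviation v' :: "real \<Rightarrow> real" where "v' \<equiv> deriv v"

lemma slope_profile:
  "\<exists>g. (\<forall>z. (v has_real_derivative v' z) (at z) \<and> 0 < v' z \<and> v' z < 1) \<and>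
     (\<forall>z. ((\<lambda>t. v' t / sqrt (1 - (v' t)\<^sup>2)) has_real_derivative g z) (at z)) \<and>
     (\<forall>z. eps * g z - (c + dh (v z)) * v' z + f (v z) = 0)"
proof -
  obtain w g where w: "\<And>z. (v has_real_derivative w z) (at z)" "\<And>z. \<bar>w z\<bar> < 1 \<and> w z > 0"
    and "\<And>z. ((\<lambda>t. w t / sqrt (1 - (w t)\<^sup>2)) has_real_derivative g z) (at z)"
    and "\<And>z. eps * g z - (c + dh (v z)) * w z + f (v z) = 0"
    using profile unfolding front_profile_def by blast
  moreover have "w = v'"
    using w(1) by (auto intro!: ext DERIV_imp_deriv[symmetric])
  ultimately show ?thesis
    by (auto simp: abs_less_iff)
qed

lemma has_deriv: "(v has_real_derivative v' z) (at z)"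
  and slope_pos: "0 < v' z"
  and slope_less_1: "v' z < 1"
  using slope_profile by blast+

lemma tendsto_at_bot: "(v \<longlongrightarrow> 0) at_bot"
  and tendsto_at_top: "(v \<longlongrightarrow> 1) at_top"
  using profile unfolding front_profile_def by blast+

lemma K_nonneg: "0 \<le> K"
  using coeff_bound[of 0] by simp

lemma strict_mono: "strict_mono v"
  using DERIV_pos_imp_increasing has_deriv slope_pos by (blast intro: strict_monoI)

lemma pos: "0 < v z"
  using DERIV_pos_imp_increasing_at_bot[of z v 0] has_deriv slope_pos tendsto_at_bot by blast

lemma less_1: "v z < 1"
proof -
  have "-1 < - v z"
  proof (rule DERIV_neg_imp_decreasing_at_top[of z "\<lambda>x. - v x"])
    show "((\<lambda>x. - v x) \<longlongrightarrow> - 1) at_top"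
      by (intro tendsto_minus tendsto_at_top)
    show "\<exists>y. ((\<lambda>x. - v x) has_real_derivative y) (at x) \<and> y < 0"
      if "x \<ge> z" for x
      using DERIV_minus[OF has_deriv] slope_pos neg_less_0_iff_less by blast
  qed
  then show ?thesis by simp
qed

lemma attains:
  assumes "s \<in> {0<..<1}" obtains z where "v z = s"
proof -
  obtain a where a: "v a < s"
    using order_tendstoD(2)[OF tendsto_at_bot] assms by (auto simp: eventually_at_bot_linorder)
  obtain b where b: "s < v b"
    using order_tendstoD(1)[OF tendsto_at_top] assms by (auto simp: eventually_at_top_linorder)
  have "a \<le> b"
    using a b strict_mono_less_eq[OF strict_mono, of a b] by simp
  moreover have "continuous_on {a..b} v"
    using has_deriv by (intro continuous_at_imp_continuous_on) (auto intro: DERIV_isCont)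
  ultimately show thesis
    using IVT'[of v a s b] a b that by auto
qed

definition Y :: "real \<Rightarrow> real" where
  "Y z = eps * (1 / sqrt (1 - (v' z)\<^sup>2) - 1)"

lemma assoc_y_front: "assoc_y eps v (v z) = Y z"
  using pos less_1 strict_mono_imp_inj_on[OF strict_mono]
  by (simp add: assoc_y_def Y_def inv_f_f)

lemma one_minus_slope_sq_pos: "0 < 1 - (v' z)\<^sup>2"
  using slope_pos[of z] slope_less_1[of z] by (simp add: power_less_one_iff)

lemma Y_nonneg: "0 \<le> Y z"
proof -
  have "sqrt (1 - (v' z)\<^sup>2) \<le> 1" "0 < sqrt (1 - (v' z)\<^sup>2)"
    using one_minus_slope_sq_pos by auto
  then have "1 \<le> 1 / sqrt (1 - (v' z)\<^sup>2)"
    by (simp add: field_simps)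
  then show ?thesis
    unfolding Y_def using eps_pos by simp
qed

text \<open>With \<open>\<phi> = v' / sqrt (1 - v'\<^sup>2)\<close> one has \<open>Y = eps (sqrt (1 + \<phi>\<^sup>2) - 1)\<close>, so the
  profile equation \<open>eps \<phi>' = (c + h'(v)) v' - f(v)\<close> becomes a first-order equation for \<open>Y\<close>.\<close>

lemma Y_has_deriv: "(Y has_real_derivative v' z * ((c + dh (v z)) * v' z - f (v z))) (at z)"
proof -
  obtain g where g: "\<And>z. ((\<lambda>t. v' t / sqrt (1 - (v' t)\<^sup>2)) has_real_derivative g z) (at z)"
    and ode: "\<And>z. eps * g z - (c + dh (v z)) * v' z + f (v z) = 0"
    using slope_profile by blast
  define \<phi> where "\<phi> = (\<lambda>t. v' t / sqrt (1 - (v' t)\<^sup>2))"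
  have sqrt_eq: "sqrt (1 + (\<phi> t)\<^sup>2) = 1 / sqrt (1 - (v' t)\<^sup>2)" for t
  proof -
    have "1 + (\<phi> t)\<^sup>2 = 1 / (1 - (v' t)\<^sup>2)"
      using one_minus_slope_sq_pos[of t] by (simp add: \<phi>_def power_divide field_simps)
    then show ?thesis by (simp add: real_sqrt_divide)
  qed
  have Y_eq: "Y = (\<lambda>t. eps * (sqrt (1 + (\<phi> t)\<^sup>2) - 1))"
    by (simp add: fun_eq_iff Y_def sqrt_eq)
  have "0 < 1 + (\<phi> z)\<^sup>2"
    by (simp add: add_pos_nonneg)
  then have "((\<lambda>t. eps * (sqrt (1 + (\<phi> t)\<^sup>2) - 1)) has_real_derivative
      eps * (inverse (sqrt (1 + (\<phi> z)\<^sup>2)) / 2 * (2 * \<phi> z * g z))) (at z)"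
    using g[of z] unfolding \<phi>_def[symmetric] by (auto intro!: derivative_eq_intros)
  also have "eps * (inverse (sqrt (1 + (\<phi> z)\<^sup>2)) / 2 * (2 * \<phi> z * g z)) = v' z * (eps * g z)"
    using one_minus_slope_sq_pos[of z] by (simp add: sqrt_eq \<phi>_def field_simps real_sqrt_divide)
  also have "eps * g z = (c + dh (v z)) * v' z - f (v z)"
    using ode[of z] by linarith
  finally show ?thesis
    unfolding Y_eq .
qed

lemma speed_bound: "\<bar>c + dh (v z)\<bar> \<le> K"
  using coeff_bound[of "v z"] pos[of z] less_1[of z] by simp

lemma Y_diff_le:
  assumes "a \<le> b" shows "\<bar>Y b - Y a\<bar> \<le> K * (v b - v a)"
proof -
  have "\<bar>v' x * ((c + dh (v x)) * v' x - f (v x))\<bar> \<le> K * v' x" for x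
  proof -
    have "\<bar>(c + dh (v x)) * v' x\<bar> \<le> \<bar>c\<bar> + \<bar>dh (v x)\<bar>"
      using slope_pos[of x] slope_less_1[of x]
        mult_left_le[of "v' x" "\<bar>c + dh (v x)\<bar>"] by (simp add: abs_mult)
    then have "\<bar>(c + dh (v x)) * v' x - f (v x)\<bar> \<le> K"
      using coeff_bound[of "v x"] pos[of x] less_1[of x] by simp
    then show ?thesis
      using slope_pos[of x] by (simp add: abs_mult mult.commute mult_left_mono)
  qed
  then have "\<bar>Y b - Y a\<bar> \<le> K * v b - K * v a"
    using DERIV_dominated_imp_abs_diff_le[OF assms, of Y "\<lambda>x. v' x * ((c + dh (v x)) * v' x - f (v x))"
        "\<lambda>t. K * v t" "\<lambda>x. K * v' x"] Y_has_deriv DERIV_cmult[OF has_deriv] by blast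
  then show ?thesis by (simp add: right_diff_distrib)
qed

lemma Y_le_if_slope_le:
  assumes "0 \<le> \<delta>" and "v' z \<le> 1 - (eps / (eps + \<delta>))\<^sup>2"
  shows "Y z \<le> \<delta>"
proof -
  define q where "q = eps / (eps + \<delta>)"
  have q: "0 < q" using eps_pos assms(1) by (simp add: q_def)
  have "(v' z)\<^sup>2 \<le> v' z"
    using slope_pos[of z] slope_less_1[of z] by (simp add: power2_eq_square mult_left_le)
  then have "q\<^sup>2 \<le> 1 - (v' z)\<^sup>2"
    using assms(2) by (simp add: q_def)
  then have "q \<le> sqrt (1 - (v' z)\<^sup>2)"
    using q real_le_rsqrt by blast
  then have "1 / sqrt (1 - (v' z)\<^sup>2) \<le> 1 / q"
    using q by (simp add: frac_le)
  then have "Y z \<le> eps * (1 / q - 1)"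
    unfolding Y_def using eps_pos by simp
  also have "\<dots> = \<delta>"
    using eps_pos assms(1) by (simp add: q_def field_simps)
  finally show ?thesis .
qed

lemma slope_le_somewhere:
  assumes "a < b" shows "\<exists>t\<in>{a..b}. v' t \<le> 1 / (b - a)"
proof (rule ccontr)
  assume "\<not> ?thesis"
  then have "\<not> v' t \<le> 1 / (b - a)" if "a \<le> t" "t \<le> b" for t
    using that by auto
  then have "\<bar>1 / (b - a)\<bar> \<le> v' t" if "a \<le> t" "t \<le> b" for t
    using that assms by fastforce
  moreover have "((\<lambda>t. t / (b - a)) has_real_derivative 1 / (b - a)) (at x)" for x
    using assms by (auto intro!: derivative_eq_intros)
  ultimately have "\<bar>b / (b - a) - a / (b - a)\<bar> \<le> v b - v a"
    using DERIV_dominated_imp_abs_diff_le[of a b "\<lambda>t. t / (b - a)" "\<lambda>_. 1 / (b - a)" v v'] assms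
      has_deriv by simp
  moreover have "b / (b - a) - a / (b - a) = 1"
    using assms by (simp add: diff_divide_distrib[symmetric])
  ultimately show False
    using pos[of a] less_1[of b] by simp
qed

lemma Y_small_somewhere:
  assumes "0 < \<delta>" obtains T where "0 < T" "\<And>a. \<exists>t\<in>{a..a + T}. Y t \<le> \<delta>"
proof
  define d where "d = 1 - (eps / (eps + \<delta>))\<^sup>2"
  have "eps / (eps + \<delta>) < 1"
    using eps_pos assms by simp
  then have "0 < d"
    using eps_pos assms by (simp add: d_def power_less_one_iff)
  then show "0 < 1 / d" by simp
  fix a
  obtain t where "t \<in> {a..a + 1 / d}" "v' t \<le> d"
    using slope_le_somewhere[of a "a + 1 / d"] \<open>0 < d\<close> by auto
  then show "\<exists>t\<in>{a..a + 1 / d}. Y t \<le> \<delta>"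
    using Y_le_if_slope_le[of \<delta> t] assms d_def by auto
qed

lemma Y_le_front: "Y z \<le> K * v z"
proof (rule field_le_epsilon)
  fix \<delta> :: real assume "0 < \<delta>"
  then obtain T where "0 < T" and "\<exists>t\<in>{z - T..z}. Y t \<le> \<delta>"
    using Y_small_somewhere[of \<delta>] by (metis diff_add_cancel)
  then obtain t where "t \<le> z" "Y t \<le> \<delta>" by auto
  moreover have "0 \<le> K * v t"
    using K_nonneg pos[of t] by simp
  ultimately show "Y z \<le> K * v z + \<delta>"
    using Y_diff_le[of t z] by (auto simp: right_diff_distrib)
qed

lemma Y_le_one_minus_front: "Y z \<le> K * (1 - v z)"
proof (rule field_le_epsilon)
  fix \<delta> :: real assume "0 < \<delta>"
  then obtain t where "z \<le> t" "Y t \<le> \<delta>"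
    using Y_small_somewhere[of \<delta>] by (metis atLeastAtMost_iff)
  then show "Y z \<le> K * (1 - v z) + \<delta>"
    using Y_diff_le[of z t] K_nonneg less_1[of t] mult_left_mono[of "v t" 1 K]
    by (auto simp: right_diff_distrib)
qed

lemma assoc_y_bounds:
  assumes "s \<in> {0..1}"
  shows "\<bar>assoc_y eps v s\<bar> \<le> K * s" "\<bar>assoc_y eps v s\<bar> \<le> K * (1 - s)"
proof -
  have "\<bar>assoc_y eps v s\<bar> \<le> K * s \<and> \<bar>assoc_y eps v s\<bar> \<le> K * (1 - s)"
  proof (cases "s \<in> {0<..<1}")
    case True
    then obtain z where "v z = s" by (rule attains)
    then show ?thesis
      using assoc_y_front[of z] Y_nonneg[of z] Y_le_front[of z] Y_le_one_minus_front[of z] by simp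
  next
    case False
    then show ?thesis
      using assms K_nonneg by (auto simp: assoc_y_def)
  qed
  then show "\<bar>assoc_y eps v s\<bar> \<le> K * s" "\<bar>assoc_y eps v s\<bar> \<le> K * (1 - s)"
    by auto
qed

text \<open>\<open>assoc_y\<close> is \<open>0\<close> at the end points by definition, so the Lipschitz bound up to them
  rests on \<open>assoc_y_bounds\<close>.\<close>

lemma assoc_y_lipschitz: "K-lipschitz_on {0..1} (assoc_y eps v)"
proof (rule lipschitz_on_leI[OF _ K_nonneg])
  fix s t :: real assume st: "s \<in> {0..1}" "t \<in> {0..1}" "s \<le> t"
  consider "s = 0" | "t = 1" | "s \<in> {0<..<1}" "t \<in> {0<..<1}"
    using st by fastforce
  then have "\<bar>assoc_y eps v s - assoc_y eps v t\<bar> \<le> K * (t - s)"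
  proof cases
    case 1
    then show ?thesis using assoc_y_bounds(1)[OF st(2)] by (simp add: assoc_y_def)
  next
    case 2
    then show ?thesis using assoc_y_bounds(2)[OF st(1)] by (simp add: assoc_y_def)
  next
    case 3
    then obtain a b where a: "v a = s" and b: "v b = t"
      by (metis attains)
    then have "a \<le> b"
      using st(3) strict_mono_less_eq[OF strict_mono, of a b] by simp
    then show ?thesis
      using Y_diff_le[of a b] assoc_y_front[of a] assoc_y_front[of b] a b
      by (simp add: abs_minus_commute)
  qed
  then show "dist (assoc_y eps v s) (assoc_y eps v t) \<le> K * dist s t"
    using st(3) by (simp add: dist_real_def)
qed

lemma energy_diff_le:
  assumes h: "\<And>x. x \<in> {0<..<1} \<Longrightarrow> (h has_real_derivative dh x) (at x)"
    and F: "\<And>x. x \<in> {0<..<1} \<Longrightarrow> (F has_real_derivative f x) (at x)"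
    and "a \<le> b"
  shows "\<bar>(Y b - c * v b - h (v b) + F (v b)) - (Y a - c * v a - h (v a) + F (v a))\<bar>
    \<le> K * ((b - a) - (v b - v a))"
proof -
  define G where "G t = Y t - c * v t - h (v t) + F (v t)" for t
  define G' where "G' x = - ((c + dh (v x)) * (v' x * (1 - v' x)))" for x
  have "v x \<in> {0<..<1}" for x
    using pos less_1 by simp
  then have "(G has_real_derivative G' x) (at x)" for x
    unfolding G_def G'_def
    by (auto intro!: derivative_eq_intros Y_has_deriv has_deriv
        DERIV_chain2[OF h] DERIV_chain2[OF F] simp: algebra_simps)
  moreover have "\<bar>G' x\<bar> \<le> K * (1 - v' x)" for x
  proof -
    have "\<bar>G' x\<bar> = \<bar>c + dh (v x)\<bar> * (v' x * (1 - v' x))"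
      using slope_pos[of x] slope_less_1[of x] by (simp add: G'_def abs_mult)
    also have "\<dots> \<le> K * (v' x * (1 - v' x))"
      using speed_bound slope_pos[of x] slope_less_1[of x] by (simp add: mult_right_mono)
    also have "\<dots> \<le> K * (1 - v' x)"
      using K_nonneg slope_pos[of x] slope_less_1[of x] by (simp add: mult_left_mono mult_left_le_one_le)
    finally show ?thesis .
  qed
  moreover have "((\<lambda>t. K * (t - v t)) has_real_derivative K * (1 - v' x)) (at x)" for x
    by (auto intro!: derivative_eq_intros has_deriv)
  ultimately have "\<bar>G b - G a\<bar> \<le> K * (b - v b) - K * (a - v a)"
    using DERIV_dominated_imp_abs_diff_le[OF \<open>a \<le> b\<close>, of G G' "\<lambda>t. K * (t - v t)" "\<lambda>x. K * (1 - v' x)"]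
    by blast
  then show ?thesis
    by (simp add: G_def algebra_simps)
qed

lemma range_unit: "v z \<in> {0..1}"
  using pos[of z] less_1[of z] by simp

end

lemma has_real_derivative_at_interior_Icc:
  assumes "(g has_real_derivative D) (at x within {a..b})" and "x \<in> {a<..<b}"
  shows "(g has_real_derivative D) (at x)"
  using assms at_within_interior[of x "{a..b}"] by simp

lemma hypH_regularity:
  assumes "hypH h dh"
  shows "continuous_on {0..1} h" "continuous_on {0..1} dh"
    and "\<And>x. x \<in> {0<..<1} \<Longrightarrow> (h has_real_derivative dh x) (at x)"
proof -
  obtain d2h where h: "\<And>x. x \<in> {0..1} \<Longrightarrow> (h has_real_derivative dh x) (at x within {0..1})"
    and dh: "\<And>x. x \<in> {0..1} \<Longrightarrow> (dh has_real_derivative d2h x) (at x within {0..1})"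
    using assms unfolding hypH_def by blast
  show "continuous_on {0..1} h" "continuous_on {0..1} dh"
    using DERIV_continuous_on h dh by blast+
  show "(h has_real_derivative dh x) (at x)" if "x \<in> {0<..<1}" for x
    using that by (intro has_real_derivative_at_interior_Icc[OF h]) auto
qed

lemma primF_regularity:
  assumes "continuous_on {0..1} f"
  shows "continuous_on {0..1} (primF f)"
    and "\<And>x. x \<in> {0<..<1} \<Longrightarrow> (primF f has_real_derivative f x) (at x)"
proof -
  have F: "(primF f has_real_derivative f x) (at x within {0..1})" if "x \<in> {0..1}" for x
    unfolding primF_def using integral_has_real_derivative[OF assms that] by simp
  show "continuous_on {0..1} (primF f)"
    using DERIV_continuous_on F by blast
  show "(primF f has_real_derivative f x) (at x)" if "x \<in> {0<..<1}" for x
    using that by (intro has_real_derivative_at_interior_Icc[OF F]) auto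
qed

lemma assoc_y_tendsto_along_fronts:
  assumes fronts: "\<And>n. travelling_front f dh (eps n) (c n) K (v n)"
    and v: "(\<lambda>n. v n z) \<longlonglongrightarrow> s"
    and y: "uniform_limit {0..1} (\<lambda>n. assoc_y (eps n) (v n)) ybar sequentially"
  shows "(\<lambda>n. assoc_y (eps n) (v n) (v n z)) \<longlonglongrightarrow> ybar s"
proof -
  note vn = travelling_front.range_unit[OF fronts]
  have "s \<in> {0..1}"
    by (rule Lim_in_closed_set[OF closed_atLeastAtMost always_eventually _ v]) (use vn in auto)
  have "\<forall>\<^sub>F n in sequentially. K-lipschitz_on {0..1} (assoc_y (eps n) (v n))"
    using travelling_front.assoc_y_lipschitz[OF fronts] by simp
  then have "K-lipschitz_on {0..1} ybar"
    by (rule lipschitz_on_tendsto[OF sequentially_bot _ tendsto_uniform_limitI[OF y]])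
  then have "continuous_on {0..1} ybar"
    by (rule lipschitz_on_continuous_on)
  moreover have "\<forall>\<^sub>F n in sequentially. v n z \<in> {0..1}"
    using vn by simp
  ultimately show ?thesis
    using uniform_limit_tendsto_compose[OF y _ v \<open>s \<in> {0..1}\<close>] by blast
qed

lemma limit_energy_constant:
  assumes fronts: "\<And>n. travelling_front f dh (eps n) (c n) K (v n)"
    and h: "continuous_on {0..1} h" "\<And>x. x \<in> {0<..<1} \<Longrightarrow> (h has_real_derivative dh x) (at x)"
    and F: "continuous_on {0..1} F" "\<And>x. x \<in> {0<..<1} \<Longrightarrow> (F has_real_derivative f x) (at x)"
    and c: "c \<longlonglongrightarrow> cbar"
    and v: "\<And>z. (\<lambda>n. v n z) \<longlonglongrightarrow> vbar z"
    and y: "uniform_limit {0..1} (\<lambda>n. assoc_y (eps n) (v n)) ybar sequentially"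
    and "a \<le> b" and unit_slope: "vbar b - vbar a = b - a"
  shows "ybar (vbar b) - cbar * vbar b - h (vbar b) + F (vbar b)
       = ybar (vbar a) - cbar * vbar a - h (vbar a) + F (vbar a)"
proof -
  define E where "E n z = assoc_y (eps n) (v n) (v n z) - c n * v n z - h (v n z) + F (v n z)" for n z
  define Ebar where "Ebar s = ybar s - cbar * s - h s + F s" for s
  have "(\<lambda>n. E n z) \<longlonglongrightarrow> Ebar (vbar z)" for z
  proof -
    note vn = travelling_front.range_unit[OF fronts]
    have "vbar z \<in> {0..1}"
      by (rule Lim_in_closed_set[OF closed_atLeastAtMost always_eventually _ v]) (use vn in auto)
    then have "(\<lambda>n. q (v n z)) \<longlonglongrightarrow> q (vbar z)" if "continuous_on {0..1} q" for q
      using continuous_on_tendsto_compose[OF that v] vn by simp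
    then show ?thesis
      unfolding E_def Ebar_def using h(1) F(1)
      by (intro tendsto_intros assoc_y_tendsto_along_fronts[OF fronts v y] c v) auto
  qed
  then have "(\<lambda>n. E n b - E n a) \<longlonglongrightarrow> Ebar (vbar b) - Ebar (vbar a)"
    by (intro tendsto_diff)
  moreover have "(\<lambda>n. E n b - E n a) \<longlonglongrightarrow> 0"
  proof (rule Lim_null_comparison)
    show "\<forall>\<^sub>F n in sequentially. norm (E n b - E n a) \<le> K * ((b - a) - (v n b - v n a))"
      using travelling_front.energy_diff_le[OF fronts h(2) F(2) \<open>a \<le> b\<close>]
        travelling_front.assoc_y_front[OF fronts] by (simp add: E_def)
    have "(\<lambda>n. K * ((b - a) - (v n b - v n a))) \<longlonglongrightarrow> K * ((b - a) - (vbar b - vbar a))"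
      by (intro tendsto_intros v)
    then show "(\<lambda>n. K * ((b - a) - (v n b - v n a))) \<longlonglongrightarrow> 0"
      by (simp add: unit_slope)
  qed
  ultimately have "Ebar (vbar b) - Ebar (vbar a) = 0"
    by (rule LIMSEQ_unique)
  then show ?thesis
    by (simp add: Ebar_def)
qed

lemma uniform_coefficient_bound:
  fixes f dh :: "real \<Rightarrow> real" and c :: "nat \<Rightarrow> real"
  assumes "continuous_on {0..1} f" "continuous_on {0..1} dh" "convergent c"
  obtains K where "\<And>n x. x \<in> {0..1} \<Longrightarrow> \<bar>c n\<bar> + \<bar>dh x\<bar> + \<bar>f x\<bar> \<le> K"
proof -
  obtain Kc where "\<And>n. \<bar>c n\<bar> \<le> Kc"
    using convergent_imp_bounded[of c] assms(3) unfolding convergent_def bounded_iff by fastforce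
  moreover obtain Kdh where "\<And>x. x \<in> {0..1} \<Longrightarrow> \<bar>dh x\<bar> \<le> Kdh"
    using compact_imp_bounded[OF compact_continuous_image[OF assms(2) compact_Icc]]
    unfolding bounded_iff by fastforce
  moreover obtain Kf where "\<And>x. x \<in> {0..1} \<Longrightarrow> \<bar>f x\<bar> \<le> Kf"
    using compact_imp_bounded[OF compact_continuous_image[OF assms(1) compact_Icc]]
    unfolding bounded_iff by fastforce
  ultimately show thesis
    using that[of "Kc + Kdh + Kf"] by (meson add_mono)
qed

theorem proposition3:
  fixes f h dh :: "real \<Rightarrow> real" and cbar :: real
    and eps :: "nat \<Rightarrow> real" and v :: "nat \<Rightarrow> real \<Rightarrow> real"
    and vbar ybar :: "real \<Rightarrow> real" and z0 z1 v0 :: real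
  assumes F: "hypF f"
    and H: "hypH h dh"
    and cbar: "(crit_speed f dh \<longlongrightarrow> cbar) (at_right 0)"
    and eps_pos: "\<And>n. eps n > 0"
    and eps_lim: "eps \<longlonglongrightarrow> 0"
    and crit: "\<And>n. front_profile f dh (eps n) (crit_speed f dh (eps n)) (v n)"
    and v_conv: "\<And>K. compact K \<Longrightarrow> uniform_limit K v vbar sequentially"
    and y_conv: "uniform_limit {0..1} (\<lambda>n. assoc_y (eps n) (v n)) ybar sequentially"
    and z01: "z0 < z1"
    and v0: "0 \<le> v0" "v0 < 1"
    and lin: "\<And>z. z \<in> {z0..z1} \<Longrightarrow> vbar z = z - z0 + v0"
  shows "cbar = (primF f (vbar z1) - primF f v0 - h (vbar z1) + h v0) / (vbar z1 - v0)
               + (ybar (vbar z1) - ybar v0) / (vbar z1 - v0)"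
proof -
  define c where "c n = crit_speed f dh (eps n)" for n
  have f: "continuous_on {0..1} f"
    using F unfolding hypF_def by blast
  have "filterlim eps (at_right 0) sequentially"
    using eps_lim eps_pos by (simp add: tendsto_imp_filterlim_at_right)
  then have c_lim: "c \<longlonglongrightarrow> cbar"
    using filterlim_compose[OF cbar] by (simp add: c_def[abs_def])
  then obtain K where "\<And>n x. x \<in> {0..1} \<Longrightarrow> \<bar>c n\<bar> + \<bar>dh x\<bar> + \<bar>f x\<bar> \<le> K"
    using uniform_coefficient_bound[OF f hypH_regularity(2)[OF H]] convergent_def by blast
  then have fronts: "travelling_front f dh (eps n) (c n) K (v n)" for n
    using eps_pos crit by unfold_locales (simp_all add: c_def)
  have "vbar z0 = v0" "vbar z1 - v0 = z1 - z0"
    using lin z01 by simp_all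
  moreover have "(\<lambda>n. v n z) \<longlonglongrightarrow> vbar z" for z
    using tendsto_uniform_limitI[OF v_conv[of "{z}"]] by simp
  ultimately have "ybar (vbar z1) - cbar * vbar z1 - h (vbar z1) + primF f (vbar z1)
      = ybar v0 - cbar * v0 - h v0 + primF f v0"
    using limit_energy_constant[OF fronts hypH_regularity(1,3)[OF H] primF_regularity[OF f]
        c_lim _ y_conv, where a = z0 and b = z1] z01 by simp
  then have "cbar * (vbar z1 - v0)
      = (primF f (vbar z1) - primF f v0 - h (vbar z1) + h v0) + (ybar (vbar z1) - ybar v0)"
    by (simp add: algebra_simps)
  moreover have "vbar z1 - v0 \<noteq> 0"
    using \<open>vbar z1 - v0 = z1 - z0\<close> z01 by simp
  ultimately show ?thesis
    by (simp add: add_divide_distrib[symmetric] eq_divide_eq)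
qed

end
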